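(* Let $p\in[1,\infty]$ with Hölder conjugate $q$, let $R_0\in\mathbb{R}^{\mathcal{S}\times\mathcal{A}}$, $\alpha>0$, and $\mathcal{R}_p=\{R:\|R-R_0\|_p\le\alpha\}$. Then for every stationary policy $\pi\in\Pi$, the robust return satisfies $$\rho^\pi_{\mathcal{R}_p}:=\min_{R\in\mathcal{R}_p}\rho^\pi_R=\rho^\pi_{R_0}-\alpha\|d^\pi\|_q.$$
   Context: Finite MDP with finite state space $\mathcal{S}$, finite action space $\mathcal{A}$, transition kernel $P$, discount $\gamma\in[0,1)$, initial distribution $\mu$ with $\mu(s)>0$ for all $s$. $\Pi$ is the set of stationary randomized policies, $\pi_s(a)=\pi(a|s)$, $P^\pi(s'|s)=\sum_a\pi_s(a)P(s'|s,a)$. Occupancy measures: $d^\pi=\mu^\top(I-\gamma P^\pi)^{-1}\in\mathbb{R}^{\mathcal{S}}$, $d^\pi(s,a)=d^\pi(s)\pi_s(a)$; norms $\|\cdot\|_p,\|\cdot\|_q$ are taken over $\mathcal{S}\times\mathcal{A}$. Return: $\rho^\pi_R=\sum_{s,a}d^\pi(s,a)R(s,a)$. *)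

theory Defs
  imports "HOL-Analysis.Analysis"
begin

text \<open>Finite MDP: states of finite type 's, actions of finite type 'a.
  Transition kernel P s a s', policy pi s a = pi(a|s), initial distribution mu.\<close>

definition Ppi :: "('s::finite \<Rightarrow> 'a::finite \<Rightarrow> real) \<Rightarrow> ('s \<Rightarrow> 'a \<Rightarrow> 's \<Rightarrow> real) \<Rightarrow> real^'s^'s" where
  "Ppi pol P = (\<chi> s s'. \<Sum>a\<in>UNIV. pol s a * P s a s')"

definition occ_state :: "('s::finite \<Rightarrow> real) \<Rightarrow> real \<Rightarrow> ('s \<Rightarrow> 'a::finite \<Rightarrow> 's \<Rightarrow> real)
    \<Rightarrow> ('s \<Rightarrow> 'a \<Rightarrow> real) \<Rightarrow> 's \<Rightarrow> real" where
  "occ_state mu gamma P pol =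
     (\<lambda>s. ((\<chi> s. mu s) v* matrix_inv (mat 1 - gamma *\<^sub>R Ppi pol P)) $ s)"

definition occ :: "('s::finite \<Rightarrow> real) \<Rightarrow> real \<Rightarrow> ('s \<Rightarrow> 'a::finite \<Rightarrow> 's \<Rightarrow> real)
    \<Rightarrow> ('s \<Rightarrow> 'a \<Rightarrow> real) \<Rightarrow> 's \<times> 'a \<Rightarrow> real" where
  "occ mu gamma P pol = (\<lambda>(s,a). occ_state mu gamma P pol s * pol s a)"

definition ret :: "('s::finite \<Rightarrow> real) \<Rightarrow> real \<Rightarrow> ('s \<Rightarrow> 'a::finite \<Rightarrow> 's \<Rightarrow> real)
    \<Rightarrow> ('s \<Rightarrow> 'a \<Rightarrow> real) \<Rightarrow> ('s \<times> 'a \<Rightarrow> real) \<Rightarrow> real" where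
  "ret mu gamma P pol R = (\<Sum>sa\<in>UNIV. occ mu gamma P pol sa * R sa)"

definition lpnorm :: "ereal \<Rightarrow> ('i::finite \<Rightarrow> real) \<Rightarrow> real" where
  "lpnorm p x = (if p = \<infinity> then Max (range (\<lambda>i. \<bar>x i\<bar>))
                 else (\<Sum>i\<in>UNIV. \<bar>x i\<bar> powr real_of_ereal p) powr (1 / real_of_ereal p))"

definition hconj :: "ereal \<Rightarrow> ereal" where
  "hconj p = (if p = \<infinity> then 1 else if p = 1 then \<infinity>
              else ereal (real_of_ereal p / (real_of_ereal p - 1)))"

end

theory Submission imports Defs begin

(* The return is affine in the reward, with slope the occupancy measure d:
   ret R = ret R0 + <d, R - R0>. Minimizing over the ball |R - R0|_p <= alpha is therefore
   minimizing the linear functional <d, u> over the alpha-ball of l_p, whose value is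
   -alpha |d|_q by the duality of l_p and l_q: Hoelder gives the lower bound, and it is
   attained at u = -alpha v for the norming vector v_i = sgn d_i |d_i|^(q-1) / |d|_q^(q-1)
   (a signed indicator of a maximal entry when q = infinity). *)

lemma lpnorm_infinity: "lpnorm \<infinity> x = Max (range (\<lambda>i. \<bar>x i\<bar>))"
  by (simp add: lpnorm_def)

lemma lpnorm_ereal: "lpnorm (ereal r) x = (\<Sum>i\<in>UNIV. \<bar>x i\<bar> powr r) powr (1 / r)"
  by (simp add: lpnorm_def)

lemma lpnorm_one: "lpnorm 1 x = (\<Sum>i\<in>UNIV. \<bar>x i\<bar>)"
  by (simp add: lpnorm_def one_ereal_def sum_nonneg)

lemma abs_le_lpnorm_infinity: "\<bar>x i\<bar> \<le> lpnorm \<infinity> x"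
  by (simp add: lpnorm_infinity)

lemma hconj_infinity: "hconj \<infinity> = 1"
  by (simp add: hconj_def)

lemma hconj_one: "hconj 1 = \<infinity>"
  by (simp add: hconj_def)

lemma hconj_ereal: "r \<noteq> 1 \<Longrightarrow> hconj (ereal r) = ereal (r / (r - 1))"
  by (simp add: hconj_def one_ereal_def)

lemma ereal_ge_1_cases:
  fixes p :: ereal
  assumes "1 \<le> p"
  obtains "p = \<infinity>" | "p = 1" | r where "p = ereal r" "1 < r"
proof (cases p)
  case (real r)
  with that assms show ?thesis by (cases "r = 1") (auto simp: one_ereal_def)
qed (use that assms in auto)

lemma lpnorm_nonneg: "0 \<le> lpnorm p x"
proof (cases "p = \<infinity>")
  case True
  then show ?thesis using abs_le_lpnorm_infinity[of x undefined] by simp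
qed (simp add: lpnorm_def)

lemma lpnorm_scale:
  assumes "1 \<le> p"
  shows "lpnorm p (\<lambda>i. c * x i) = \<bar>c\<bar> * lpnorm p x"
  using assms
proof (cases rule: ereal_ge_1_cases)
  case 1
  have "\<bar>c\<bar> * Max (range (\<lambda>i. \<bar>x i\<bar>)) = Max ((\<lambda>t. \<bar>c\<bar> * t) ` range (\<lambda>i. \<bar>x i\<bar>))"
    by (rule mono_Max_commute) (auto simp: mono_def mult_left_mono)
  then show ?thesis by (simp add: 1 lpnorm_infinity abs_mult image_image)
next
  case 2
  then show ?thesis by (simp add: lpnorm_one abs_mult sum_distrib_left)
next
  case (3 r)
  have "(\<Sum>i\<in>UNIV. \<bar>c * x i\<bar> powr r) = \<bar>c\<bar> powr r * (\<Sum>i\<in>UNIV. \<bar>x i\<bar> powr r)"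
    by (simp add: abs_mult powr_mult sum_distrib_left)
  moreover have "r \<noteq> 0" using \<open>1 < r\<close> by simp
  ultimately show ?thesis by (simp add: 3 lpnorm_ereal powr_mult powr_powr sum_nonneg)
qed

lemma Holders_inequality_sum:
  fixes x y :: "'i::finite \<Rightarrow> real" and p q :: real
  assumes pq: "1 < p" "1 < q" "1 / p + 1 / q = 1"
    and x: "\<And>i. 0 \<le> x i" and y: "\<And>i. 0 \<le> y i"
  shows "(\<Sum>i\<in>UNIV. x i * y i)
    \<le> (\<Sum>i\<in>UNIV. x i powr p) powr (1 / p) * (\<Sum>i\<in>UNIV. y i powr q) powr (1 / q)"
proof -
  define X where "X = (\<Sum>i\<in>UNIV. x i powr p)"
  define Y where "Y = (\<Sum>i\<in>UNIV. y i powr q)"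
  show ?thesis
  proof (cases "X = 0 \<or> Y = 0")
    case True
    then have "(\<forall>i. x i = 0) \<or> (\<forall>i. y i = 0)"
      unfolding X_def Y_def using x y by (subst (asm) sum_nonneg_eq_0_iff; simp)+
    then show ?thesis by auto
  next
    case False
    then have "0 < X" "0 < Y" unfolding X_def Y_def by (simp_all add: less_le sum_nonneg)
    define A where "A = X powr (1 / p)"
    define B where "B = Y powr (1 / q)"
    have "0 < A" "0 < B" using \<open>0 < X\<close> \<open>0 < Y\<close> by (simp_all add: A_def B_def)
    have "A powr p = X" "B powr q = Y"
      using \<open>0 < X\<close> \<open>0 < Y\<close> pq by (simp_all add: A_def B_def powr_powr)
    have "(\<Sum>i\<in>UNIV. (x i / A) * (y i / B))
        \<le> (\<Sum>i\<in>UNIV. (x i / A) powr p / p + (y i / B) powr q / q)"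
      by (rule sum_mono, rule Youngs_inequality) (use pq x y \<open>0 < A\<close> \<open>0 < B\<close> in auto)
    also have "\<dots> = X / A powr p / p + Y / B powr q / q"
      using x y \<open>0 < A\<close> \<open>0 < B\<close>
      by (simp add: X_def Y_def sum.distrib powr_divide sum_divide_distrib)
    also have "\<dots> = 1"
      using \<open>A powr p = X\<close> \<open>B powr q = Y\<close> \<open>0 < X\<close> \<open>0 < Y\<close> pq by simp
    finally have "(\<Sum>i\<in>UNIV. x i * y i) / (A * B) \<le> 1"
      by (simp add: sum_divide_distrib)
    then show ?thesis
      using \<open>0 < A\<close> \<open>0 < B\<close> by (simp add: A_def B_def X_def Y_def divide_le_eq)
  qed
qed

lemma abs_sum_mult_le_lpnorm_hconj:
  assumes "1 \<le> p"
  shows "\<bar>\<Sum>i\<in>UNIV. d i * u i\<bar> \<le> lpnorm (hconj p) d * lpnorm p u"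
proof -
  have "\<bar>\<Sum>i\<in>UNIV. d i * u i\<bar> \<le> (\<Sum>i\<in>UNIV. \<bar>d i\<bar> * \<bar>u i\<bar>)"
    using sum_abs[of "\<lambda>i. d i * u i" UNIV] by (simp add: abs_mult)
  also have "\<dots> \<le> lpnorm (hconj p) d * lpnorm p u"
    using assms
  proof (cases rule: ereal_ge_1_cases)
    case 1
    have "(\<Sum>i\<in>UNIV. \<bar>d i\<bar> * \<bar>u i\<bar>) \<le> (\<Sum>i\<in>UNIV. \<bar>d i\<bar> * lpnorm \<infinity> u)"
      by (intro sum_mono mult_left_mono abs_le_lpnorm_infinity) simp
    then show ?thesis by (simp add: 1 hconj_infinity lpnorm_one sum_distrib_right)
  next
    case 2
    have "(\<Sum>i\<in>UNIV. \<bar>d i\<bar> * \<bar>u i\<bar>) \<le> (\<Sum>i\<in>UNIV. lpnorm \<infinity> d * \<bar>u i\<bar>)"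
      by (intro sum_mono mult_right_mono abs_le_lpnorm_infinity) simp
    then show ?thesis by (simp add: 2 hconj_one lpnorm_one sum_distrib_left)
  next
    case (3 r)
    define s where "s = r / (r - 1)"
    have "1 < s" "1 / s + 1 / r = 1" using \<open>1 < r\<close> by (simp_all add: s_def field_simps)
    moreover have "hconj p = ereal s" using hconj_ereal[of r] \<open>1 < r\<close> by (simp add: 3 s_def)
    ultimately show ?thesis
      using Holders_inequality_sum[of s r "\<lambda>i. \<bar>d i\<bar>" "\<lambda>i. \<bar>u i\<bar>"] \<open>1 < r\<close>
      by (simp add: 3 lpnorm_ereal)
  qed
  finally show ?thesis .
qed

lemma lpnorm_hconj_attained_infinity:
  "\<exists>u. lpnorm \<infinity> u \<le> 1 \<and> (\<Sum>i\<in>UNIV. d i * u i) = lpnorm (hconj \<infinity>) d"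
proof (intro exI conjI)
  show "lpnorm \<infinity> (\<lambda>i. sgn (d i)) \<le> 1"
    by (simp add: lpnorm_infinity abs_sgn_eq)
  show "(\<Sum>i\<in>UNIV. d i * sgn (d i)) = lpnorm (hconj \<infinity>) d"
    by (simp add: hconj_infinity lpnorm_one abs_sgn)
qed

lemma lpnorm_hconj_attained_one:
  "\<exists>u. lpnorm 1 u \<le> 1 \<and> (\<Sum>i\<in>UNIV. d i * u i) = lpnorm (hconj 1) d"
proof -
  have "lpnorm \<infinity> d \<in> range (\<lambda>i. \<bar>d i\<bar>)"
    unfolding lpnorm_infinity by (rule Max_in) auto
  then obtain j where j: "\<bar>d j\<bar> = lpnorm \<infinity> d" by auto
  define u where "u i = (if i = j then sgn (d j) else 0)" for i
  have "lpnorm 1 u = \<bar>sgn (d j)\<bar>"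
    by (simp add: lpnorm_one u_def if_distrib cong: if_cong)
  moreover have "(\<Sum>i\<in>UNIV. d i * u i) = d j * sgn (d j)"
    by (simp add: u_def if_distrib cong: if_cong)
  ultimately show ?thesis
    using j by (intro exI[of _ u]) (simp add: hconj_one abs_sgn_eq abs_sgn[symmetric])
qed

lemma lpnorm_hconj_attained_ereal:
  assumes "1 < r"
  shows "\<exists>u. lpnorm (ereal r) u \<le> 1 \<and> (\<Sum>i\<in>UNIV. d i * u i) = lpnorm (hconj (ereal r)) d"
proof -
  define s where "s = r / (r - 1)"
  define N where "N = lpnorm (ereal s) d"
  have "1 < s" "(s - 1) * r = s" using assms by (simp_all add: s_def field_simps)
  have N: "N = lpnorm (hconj (ereal r)) d" using assms by (simp add: N_def s_def hconj_ereal)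
  have N_powr: "N powr s = (\<Sum>i\<in>UNIV. \<bar>d i\<bar> powr s)"
    using \<open>1 < s\<close> by (simp add: N_def lpnorm_ereal powr_powr sum_nonneg)
  show ?thesis
  proof (cases "N = 0")
    case True
    then have "d i = 0" for i
      using N_powr \<open>1 < s\<close> by (simp add: sum_nonneg_eq_0_iff)
    then show ?thesis using assms True N by (intro exI[of _ "\<lambda>_. 0"]) (simp add: lpnorm_ereal)
  next
    case False
    then have "0 < N" using lpnorm_nonneg[of "ereal s" d] by (simp add: N_def)
    \<comment> \<open>the norming vector: equality case of Hoelder's inequality\<close>
    define u where "u i = sgn (d i) * \<bar>d i\<bar> powr (s - 1) / N powr (s - 1)" for i
    have "\<bar>u i\<bar> powr r = \<bar>d i\<bar> powr s / N powr s" for i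
      using \<open>0 < N\<close> \<open>(s - 1) * r = s\<close>
      by (cases "d i = 0") (simp_all add: u_def abs_mult powr_divide powr_powr)
    then have "(\<Sum>i\<in>UNIV. \<bar>u i\<bar> powr r) = 1"
      using \<open>0 < N\<close> by (simp add: sum_divide_distrib[symmetric] N_powr[symmetric])
    then have "lpnorm (ereal r) u = 1" by (simp add: lpnorm_ereal)
    have "d i * u i = \<bar>d i\<bar> powr s / N powr (s - 1)" for i
    proof -
      have "d i * u i = (d i * sgn (d i)) * \<bar>d i\<bar> powr (s - 1) / N powr (s - 1)"
        by (simp add: u_def)
      also have "\<dots> = \<bar>d i\<bar> powr s / N powr (s - 1)"
        using \<open>1 < s\<close> by (cases "d i = 0") (simp_all add: abs_sgn[symmetric] powr_mult_base)
      finally show ?thesis .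
    qed
    then have "(\<Sum>i\<in>UNIV. d i * u i) = N powr s / N powr (s - 1)"
      by (simp add: sum_divide_distrib[symmetric] N_powr)
    also have "\<dots> = N" using \<open>0 < N\<close> by (simp add: powr_diff)
    finally show ?thesis using N \<open>lpnorm (ereal r) u = 1\<close> by (intro exI[of _ u]) simp
  qed
qed

lemma lpnorm_hconj_attained:
  assumes "1 \<le> p"
  shows "\<exists>u. lpnorm p u \<le> 1 \<and> (\<Sum>i\<in>UNIV. d i * u i) = lpnorm (hconj p) d"
  using assms
proof (cases rule: ereal_ge_1_cases)
  case 1
  then show ?thesis using lpnorm_hconj_attained_infinity by simp
next
  case 2
  then show ?thesis using lpnorm_hconj_attained_one by simp
next
  case (3 r)
  then show ?thesis using lpnorm_hconj_attained_ereal by simp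
qed

lemma ret_eq_ret_add:
  "ret mu gamma P pol R = ret mu gamma P pol R0 + (\<Sum>sa\<in>UNIV. occ mu gamma P pol sa * (R sa - R0 sa))"
  by (simp add: ret_def right_diff_distrib sum_subtractf)

theorem corollary1:
  fixes P :: "'s::finite \<Rightarrow> 'a::finite \<Rightarrow> 's \<Rightarrow> real"
    and mu :: "'s \<Rightarrow> real" and gamma :: real
    and pol :: "'s \<Rightarrow> 'a \<Rightarrow> real"
    and R0 :: "'s \<times> 'a \<Rightarrow> real" and alpha :: real and p :: ereal
  assumes P_nonneg: "\<And>s a s'. P s a s' \<ge> 0"
    and P_sum: "\<And>s a. (\<Sum>s'\<in>UNIV. P s a s') = 1"
    and gamma: "0 \<le> gamma" "gamma < 1"
    and mu_pos: "\<And>s. mu s > 0" and mu_sum: "(\<Sum>s\<in>UNIV. mu s) = 1"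
    and pol_nonneg: "\<And>s a. pol s a \<ge> 0"
    and pol_sum: "\<And>s. (\<Sum>a\<in>UNIV. pol s a) = 1"
    and p: "1 \<le> p"
    and alpha: "alpha > 0"
  shows "(\<exists>R. lpnorm p (\<lambda>sa. R sa - R0 sa) \<le> alpha \<and>
              ret mu gamma P pol R = ret mu gamma P pol R0 - alpha * lpnorm (hconj p) (occ mu gamma P pol))
         \<and> (\<forall>R. lpnorm p (\<lambda>sa. R sa - R0 sa) \<le> alpha \<longrightarrow>
              ret mu gamma P pol R0 - alpha * lpnorm (hconj p) (occ mu gamma P pol) \<le> ret mu gamma P pol R)"
proof -
  define d where "d = occ mu gamma P pol"
  define N where "N = lpnorm (hconj p) d"
  note affine = ret_eq_ret_add[of mu gamma P pol _ R0, folded d_def]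
  obtain v where v: "lpnorm p v \<le> 1" "(\<Sum>i\<in>UNIV. d i * v i) = N"
    using lpnorm_hconj_attained[OF p] unfolding N_def by blast
  define R where "R sa = R0 sa - alpha * v sa" for sa
  have "lpnorm p (\<lambda>sa. R sa - R0 sa) \<le> alpha"
    using lpnorm_scale[OF p, of "- alpha" v] v(1) alpha by (simp add: R_def)
  moreover have "ret mu gamma P pol R = ret mu gamma P pol R0 - alpha * N"
    using v(2) by (simp add: affine[of R] R_def sum_negf mult.left_commute flip: sum_distrib_left)
  moreover have "ret mu gamma P pol R0 - alpha * N \<le> ret mu gamma P pol R'"
    if "lpnorm p (\<lambda>sa. R' sa - R0 sa) \<le> alpha" for R'
  proof -
    have "\<bar>\<Sum>sa\<in>UNIV. d sa * (R' sa - R0 sa)\<bar> \<le> N * lpnorm p (\<lambda>sa. R' sa - R0 sa)"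
      using abs_sum_mult_le_lpnorm_hconj[OF p] unfolding N_def .
    also have "\<dots> \<le> N * alpha"
      using that lpnorm_nonneg[of "hconj p" d] by (simp add: N_def mult_left_mono)
    finally show ?thesis by (simp add: affine[of R'] abs_le_iff algebra_simps)
  qed
  ultimately show ?thesis unfolding N_def d_def by blast
qed

end
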